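(* Let $G$ and $H$ be nontrivial finite, simple, connected graphs. Then (i) $\gamma_P(G\circ H)=1$ if and only if $\gamma(G)=1$ and $\gamma_P(H)=1$; (ii) $\gamma_P(G\circ H)=2$ if and only if either $\gamma(G)=2$ and $\gamma_P(H)=1$, or $\mathrm{diam}(\overline{G})>2$ and $\gamma_P(H)>1$.
   Context: The lexicographic product $G\circ H$ has vertex set $V(G)\times V(H)$, with $(g,h)$ adjacent to $(g',h')$ iff $gg'\in E(G)$, or $g=g'$ and $hh'\in E(H)$. $\overline{G}$ is the complement of $G$ (its diameter is infinite if it is disconnected). $\gamma(G)$ is the domination number. For $U\subseteq V(G)$, $cl(U)$ is obtained by coloring $U$ black and repeatedly applying: if a black vertex has exactly one white neighbor, that neighbor becomes black. $S$ is a power dominating set if $cl(N[S])=V(G)$; $\gamma_P$ is the minimum size of a power dominating set. *)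

theory Defs
  imports Main "HOL-Library.Extended_Nat"
begin

definition simple_graph :: "'a set \<Rightarrow> ('a \<Rightarrow> 'a \<Rightarrow> bool) \<Rightarrow> bool" where
  "simple_graph V E \<longleftrightarrow> finite V \<and> (\<forall>x y. E x y \<longrightarrow> x \<in> V \<and> y \<in> V)
     \<and> (\<forall>x y. E x y \<longrightarrow> E y x) \<and> (\<forall>x. \<not> E x x)"

definition nontrivial_graph :: "'a set \<Rightarrow> ('a \<Rightarrow> 'a \<Rightarrow> bool) \<Rightarrow> bool" where
  "nontrivial_graph V E \<longleftrightarrow> card V \<ge> 2"

fun walk_len :: "'a set \<Rightarrow> ('a \<Rightarrow> 'a \<Rightarrow> bool) \<Rightarrow> nat \<Rightarrow> 'a \<Rightarrow> 'a \<Rightarrow> bool" where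
  "walk_len V E 0 u v \<longleftrightarrow> u \<in> V \<and> u = v"
| "walk_len V E (Suc n) u v \<longleftrightarrow> (\<exists>w. E u w \<and> w \<in> V \<and> u \<in> V \<and> walk_len V E n w v)"

definition connected_graph :: "'a set \<Rightarrow> ('a \<Rightarrow> 'a \<Rightarrow> bool) \<Rightarrow> bool" where
  "connected_graph V E \<longleftrightarrow> (\<forall>u\<in>V. \<forall>v\<in>V. \<exists>n. walk_len V E n u v)"

definition gdist :: "'a set \<Rightarrow> ('a \<Rightarrow> 'a \<Rightarrow> bool) \<Rightarrow> 'a \<Rightarrow> 'a \<Rightarrow> enat" where
  "gdist V E u v = (if \<exists>n. walk_len V E n u v
                    then enat (LEAST n. walk_len V E n u v) else \<infinity>)"

definition diam :: "'a set \<Rightarrow> ('a \<Rightarrow> 'a \<Rightarrow> bool) \<Rightarrow> enat" where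
  "diam V E = (SUP p\<in>V \<times> V. gdist V E (fst p) (snd p))"

definition complement :: "'a set \<Rightarrow> ('a \<Rightarrow> 'a \<Rightarrow> bool) \<Rightarrow> ('a \<Rightarrow> 'a \<Rightarrow> bool)" where
  "complement V E = (\<lambda>x y. x \<in> V \<and> y \<in> V \<and> x \<noteq> y \<and> \<not> E x y)"

definition lex_edges :: "'a set \<Rightarrow> ('a \<Rightarrow> 'a \<Rightarrow> bool) \<Rightarrow> 'b set \<Rightarrow> ('b \<Rightarrow> 'b \<Rightarrow> bool)
    \<Rightarrow> ('a \<times> 'b \<Rightarrow> 'a \<times> 'b \<Rightarrow> bool)" where
  "lex_edges VG EG VH EH = (\<lambda>(g,h) (g',h'). g \<in> VG \<and> g' \<in> VG \<and> h \<in> VH \<and> h' \<in> VH \<and>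
      (EG g g' \<or> (g = g' \<and> EH h h')))"

definition nbhd :: "('a \<Rightarrow> 'a \<Rightarrow> bool) \<Rightarrow> 'a \<Rightarrow> 'a set" where
  "nbhd E v = {u. E v u}"

definition closed_nbhd_set :: "'a set \<Rightarrow> ('a \<Rightarrow> 'a \<Rightarrow> bool) \<Rightarrow> 'a set \<Rightarrow> 'a set" where
  "closed_nbhd_set V E S = S \<union> {u. \<exists>v\<in>S. E v u}"

definition dominating_set :: "'a set \<Rightarrow> ('a \<Rightarrow> 'a \<Rightarrow> bool) \<Rightarrow> 'a set \<Rightarrow> bool" where
  "dominating_set V E S \<longleftrightarrow> S \<subseteq> V \<and> closed_nbhd_set V E S = V"

definition domination_number :: "'a set \<Rightarrow> ('a \<Rightarrow> 'a \<Rightarrow> bool) \<Rightarrow> nat" where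
  "domination_number V E = (LEAST k. \<exists>S. dominating_set V E S \<and> card S = k)"

text \<open>Zero forcing closure: color U black, then repeatedly a black vertex with
exactly one white neighbour forces that neighbour.  The result is independent
of the order, so we define it as the least set closed under the rule.\<close>
inductive_set zf_closure :: "'a set \<Rightarrow> ('a \<Rightarrow> 'a \<Rightarrow> bool) \<Rightarrow> 'a set \<Rightarrow> 'a set"
  for V E U where
  base: "u \<in> U \<Longrightarrow> u \<in> zf_closure V E U"
| force: "\<lbrakk> v \<in> zf_closure V E U; E v w; w \<in> V;
           \<forall>x. E v x \<and> x \<in> V \<and> x \<noteq> w \<longrightarrow> x \<in> zf_closure V E U \<rbrakk>
          \<Longrightarrow> w \<in> zf_closure V E U"

definition power_dominating_set :: "'a set \<Rightarrow> ('a \<Rightarrow> 'a \<Rightarrow> bool) \<Rightarrow> 'a set \<Rightarrow> bool" where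
  "power_dominating_set V E S \<longleftrightarrow> S \<subseteq> V \<and> zf_closure V E (closed_nbhd_set V E S) = V"

definition power_domination_number :: "'a set \<Rightarrow> ('a \<Rightarrow> 'a \<Rightarrow> bool) \<Rightarrow> nat" where
  "power_domination_number V E = (LEAST k. \<exists>S. power_dominating_set V E S \<and> card S = k)"

end

theory Submission
  imports Defs
begin

(* A set S power dominates G \<circ> H only if its projection to G dominates G, and a vertex (g, h) of
   S with {h} power dominating H observes its whole layer {g} \<times> V(H) by copying the forcing
   process of H, while every layer adjacent in G to the projection of S is observed at once.  The
   obstruction is that a vertex outside a layer which sees one vertex of the layer sees all of it:
   if {h} does not power dominate H and no other vertex of S lies over the closed neighbourhood of
   g, the vertices of the layer of g that {h} does not observe in H (at least two, H being
   connected) stay unobserved for ever.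

   Hence {(g, h)} works iff g dominates G and h power dominates H; and when no single vertex
   works, two vertices suffice iff either G has a dominating pair and H a power dominating vertex,
   or G has a dominating edge, which is exactly diam (complement G) > 2. *)

section \<open>Simple graphs and zero forcing\<close>

lemma simple_graph_edgeD:
  assumes "simple_graph V E" "E x y"
  shows "x \<in> V" "y \<in> V" "E y x" "x \<noteq> y"
  using assms unfolding simple_graph_def by metis+

lemma closed_nbhd_set_subset:
  assumes "simple_graph V E" "S \<subseteq> V"
  shows "closed_nbhd_set V E S \<subseteq> V"
  using assms unfolding closed_nbhd_set_def simple_graph_def by blast

lemma zf_closure_minimal:
  assumes "U \<subseteq> T"
    and "\<And>v w. v \<in> T \<Longrightarrow> E v w \<Longrightarrow> w \<in> V \<Longrightarrow>
           (\<forall>x. E v x \<and> x \<in> V \<and> x \<noteq> w \<longrightarrow> x \<in> T) \<Longrightarrow> w \<in> T"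
  shows "zf_closure V E U \<subseteq> T"
proof
  fix x assume "x \<in> zf_closure V E U"
  then show "x \<in> T"
    by (induction rule: zf_closure.induct) (use assms in blast)+
qed

lemma zf_closure_subset: "U \<subseteq> V \<Longrightarrow> zf_closure V E U \<subseteq> V"
  by (rule zf_closure_minimal) auto

lemma zf_closure_empty: "zf_closure V E {} = {}"
  using zf_closure_minimal[of "{}" "{}" E V] by blast

lemma obtain_other_vertex:
  assumes "card V \<ge> 2"
  obtains z where "z \<in> V" "z \<noteq> y"
proof -
  have "\<not> V \<subseteq> {y}"
  proof
    assume "V \<subseteq> {y}"
    then have "card V \<le> card {y}" by (intro card_mono) auto
    with assms show False by simp
  qed
  then show ?thesis using that by blast
qed

lemma connected_graph_obtain_neighbour:
  assumes "connected_graph V E" "card V \<ge> 2" "y \<in> V"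
  obtains w where "E y w"
proof -
  obtain z where "z \<in> V" "z \<noteq> y" using obtain_other_vertex assms(2) .
  then obtain n where "walk_len V E n y z"
    using assms unfolding connected_graph_def by blast
  with \<open>z \<noteq> y\<close> show ?thesis using that by (cases n) auto
qed

lemma zf_closure_complement_not_singleton:
  assumes "simple_graph V E" "connected_graph V E" "card V \<ge> 2"
  shows "V - zf_closure V E U \<noteq> {y}"
proof
  assume white: "V - zf_closure V E U = {y}"
  then have "y \<in> V" by blast
  then obtain w where "E y w"
    using connected_graph_obtain_neighbour[OF assms(2,3)] by blast
  then have "E w y" "w \<in> V" "w \<noteq> y"
    using simple_graph_edgeD[OF assms(1)] by blast+
  then have "w \<in> zf_closure V E U"
    and "\<forall>x. E w x \<and> x \<in> V \<and> x \<noteq> y \<longrightarrow> x \<in> zf_closure V E U"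
    using white by blast+
  then have "y \<in> zf_closure V E U"
    using zf_closure.force[of w V E U y] \<open>E w y\<close> \<open>y \<in> V\<close> by blast
  with white show False by blast
qed

section \<open>Domination numbers of size one and two\<close>

lemma
  fixes P :: "'c set \<Rightarrow> bool"
  assumes witness: "P S\<^sub>0" and not_empty: "\<not> P {}" and finite: "\<And>S. P S \<Longrightarrow> finite S"
  shows Least_card_neq_0: "(LEAST k. \<exists>S. P S \<and> card S = k) \<noteq> 0"
    and Least_card_eq_1_iff: "(LEAST k. \<exists>S. P S \<and> card S = k) = 1 \<longleftrightarrow> (\<exists>a. P {a})"
    and Least_card_eq_2_iff: "(LEAST k. \<exists>S. P S \<and> card S = k) = 2 \<longleftrightarrow>
           \<not> (\<exists>a. P {a}) \<and> (\<exists>a b. a \<noteq> b \<and> P {a, b})"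
proof -
  define L where "L = (LEAST k. \<exists>S. P S \<and> card S = k)"
  have attained: "\<exists>S. P S \<and> card S = L"
    unfolding L_def by (rule LeastI[of _ "card S\<^sub>0"]) (use witness in blast)
  have le_card: "L \<le> card S" if "P S" for S
    unfolding L_def by (rule Least_le) (use that in blast)
  have card_nonzero: "card S \<noteq> 0" if "P S" for S
  proof
    assume "card S = 0"
    then have "S = {}" using finite[OF that] by simp
    then show False using not_empty that by simp
  qed
  show L0: "L \<noteq> 0" using attained card_nonzero by blast
  show L1: "L = 1 \<longleftrightarrow> (\<exists>a. P {a})"
  proof
    assume "L = 1"
    then show "\<exists>a. P {a}" using attained by (auto simp: card_1_singleton_iff)
  next
    assume "\<exists>a. P {a}"
    then obtain a where "P {a}" ..
    then have "L \<le> 1" using le_card by fastforce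
    then show "L = 1" using L0 by simp
  qed
  show "L = 2 \<longleftrightarrow> \<not> (\<exists>a. P {a}) \<and> (\<exists>a b. a \<noteq> b \<and> P {a, b})"
  proof
    assume "L = 2"
    moreover obtain S where "P S" "card S = L" using attained by blast
    ultimately obtain a b where "a \<noteq> b" "P {a, b}" by (auto simp: card_2_iff)
    with \<open>L = 2\<close> L1 show "\<not> (\<exists>a. P {a}) \<and> (\<exists>a b. a \<noteq> b \<and> P {a, b})" by auto
  next
    assume pair: "\<not> (\<exists>a. P {a}) \<and> (\<exists>a b. a \<noteq> b \<and> P {a, b})"
    then obtain a b where "a \<noteq> b" "P {a, b}" by blast
    then have "L \<le> 2" using le_card by fastforce
    moreover have "L \<noteq> 1" using pair L1 by blast
    ultimately show "L = 2" using L0 by linarith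
  qed
qed

lemma power_dominating_set_finite:
  "simple_graph V E \<Longrightarrow> power_dominating_set V E S \<Longrightarrow> finite S"
  unfolding simple_graph_def power_dominating_set_def by (blast intro: finite_subset)

lemma power_dominating_set_vertex_set:
  assumes "simple_graph V E"
  shows "power_dominating_set V E V"
proof -
  have "closed_nbhd_set V E V = V"
    using closed_nbhd_set_subset[OF assms] by (auto simp: closed_nbhd_set_def)
  then show ?thesis
    using zf_closure_subset[of V V E] zf_closure.base[of _ V]
    by (auto simp: power_dominating_set_def)
qed

lemma not_power_dominating_set_empty: "V \<noteq> {} \<Longrightarrow> \<not> power_dominating_set V E {}"
  by (simp add: power_dominating_set_def closed_nbhd_set_def zf_closure_empty)

lemma
  assumes "simple_graph V E" "V \<noteq> {}"
  shows power_domination_number_eq_1_iff: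
      "power_domination_number V E = 1 \<longleftrightarrow> (\<exists>a. power_dominating_set V E {a})"
    and power_domination_number_eq_2_iff:
      "power_domination_number V E = 2 \<longleftrightarrow> \<not> (\<exists>a. power_dominating_set V E {a})
         \<and> (\<exists>a b. a \<noteq> b \<and> power_dominating_set V E {a, b})"
    and power_domination_number_gt_1_iff:
      "power_domination_number V E > 1 \<longleftrightarrow> \<not> (\<exists>a. power_dominating_set V E {a})"
proof -
  note facts = power_dominating_set_vertex_set[OF assms(1)]
    not_power_dominating_set_empty[OF assms(2)] power_dominating_set_finite[OF assms(1)]
  show eq_1: "power_domination_number V E = 1 \<longleftrightarrow> (\<exists>a. power_dominating_set V E {a})"
    unfolding power_domination_number_def using facts by (rule Least_card_eq_1_iff)
  show "power_domination_number V E = 2 \<longleftrightarrow> \<not> (\<exists>a. power_dominating_set V E {a})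
         \<and> (\<exists>a b. a \<noteq> b \<and> power_dominating_set V E {a, b})"
    unfolding power_domination_number_def using facts by (rule Least_card_eq_2_iff)
  have "power_domination_number V E \<noteq> 0"
    unfolding power_domination_number_def using facts by (rule Least_card_neq_0)
  then show "power_domination_number V E > 1 \<longleftrightarrow> \<not> (\<exists>a. power_dominating_set V E {a})"
    unfolding eq_1[symmetric] by presburger
qed

lemma
  assumes "simple_graph V E" "V \<noteq> {}"
  shows domination_number_eq_1_iff:
      "domination_number V E = 1 \<longleftrightarrow> (\<exists>a. dominating_set V E {a})"
    and domination_number_eq_2_iff:
      "domination_number V E = 2 \<longleftrightarrow> \<not> (\<exists>a. dominating_set V E {a})
         \<and> (\<exists>a b. a \<noteq> b \<and> dominating_set V E {a, b})"
proof -
  have dominating_V: "dominating_set V E V"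
    using closed_nbhd_set_subset[OF assms(1)]
    by (auto simp: dominating_set_def closed_nbhd_set_def)
  have not_dominating_empty: "\<not> dominating_set V E {}"
    using assms(2) by (simp add: dominating_set_def closed_nbhd_set_def)
  have finite: "finite S" if "dominating_set V E S" for S
    using that assms(1) unfolding simple_graph_def dominating_set_def by (blast intro: finite_subset)
  note facts = dominating_V not_dominating_empty finite
  from facts show "domination_number V E = 1 \<longleftrightarrow> (\<exists>a. dominating_set V E {a})"
    unfolding domination_number_def by (rule Least_card_eq_1_iff)
  from facts show "domination_number V E = 2 \<longleftrightarrow> \<not> (\<exists>a. dominating_set V E {a})
         \<and> (\<exists>a b. a \<noteq> b \<and> dominating_set V E {a, b})"
    unfolding domination_number_def by (rule Least_card_eq_2_iff)
qed

section \<open>Diameter of the complement\<close>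

lemma gdist_le_enat_iff: "gdist V E u v \<le> enat k \<longleftrightarrow> (\<exists>n\<le>k. walk_len V E n u v)"
proof (cases "\<exists>n. walk_len V E n u v")
  case True
  then have "walk_len V E (LEAST n. walk_len V E n u v) u v" by (rule LeastI_ex)
  with True show ?thesis
    unfolding gdist_def by (auto intro: Least_le order.trans)
qed (simp add: gdist_def)

definition has_dominating_edge :: "'a set \<Rightarrow> ('a \<Rightarrow> 'a \<Rightarrow> bool) \<Rightarrow> bool" where
  "has_dominating_edge V E \<longleftrightarrow> (\<exists>u v. E u v \<and> dominating_set V E {u, v})"

lemma complement_gdist_gt_2_iff:
  assumes "simple_graph V E" "u \<in> V" "v \<in> V"
  shows "2 < gdist V (complement V E) u v \<longleftrightarrow> E u v \<and> dominating_set V E {u, v}"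
proof -
  let ?K = "complement V E"
  have sym: "E w v \<longleftrightarrow> E v w" and irrefl: "\<not> E x x" for w x
    using assms(1) unfolding simple_graph_def by metis+
  have "2 < gdist V ?K u v \<longleftrightarrow> \<not> (\<exists>n\<le>2. walk_len V ?K n u v)"
    by (simp add: gdist_le_enat_iff[symmetric] not_le numeral_eq_enat)
  also have "\<dots> \<longleftrightarrow> \<not> (u = v \<or> ?K u v \<or> (\<exists>w. ?K u w \<and> ?K w v))"
  proof -
    have "(\<exists>n\<le>2. P n) \<longleftrightarrow> P 0 \<or> P 1 \<or> P 2" for P :: "nat \<Rightarrow> bool"
      by (auto simp: le_Suc_eq numeral_2_eq_2)
    moreover have "walk_len V ?K 0 u v \<longleftrightarrow> u = v" "walk_len V ?K 1 u v \<longleftrightarrow> ?K u v"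
      "walk_len V ?K 2 u v \<longleftrightarrow> (\<exists>w. ?K u w \<and> ?K w v)"
      using assms(2) by (auto simp: numeral_2_eq_2 complement_def)
    ultimately show ?thesis by simp
  qed
  also have "\<dots> \<longleftrightarrow> E u v \<and> (\<forall>w\<in>V. w = u \<or> w = v \<or> E u w \<or> E v w)"
    using assms(2,3) irrefl unfolding complement_def by (auto simp: sym)
  also have "\<dots> \<longleftrightarrow> E u v \<and> dominating_set V E {u, v}"
    using assms unfolding dominating_set_def closed_nbhd_set_def simple_graph_def by blast
  finally show ?thesis .
qed

lemma diam_complement_gt_2_iff:
  assumes "simple_graph V E"
  shows "2 < diam V (complement V E) \<longleftrightarrow> has_dominating_edge V E"
proof -
  have "2 < diam V (complement V E) \<longleftrightarrow> (\<exists>(u, v)\<in>V \<times> V. 2 < gdist V (complement V E) u v)"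
    unfolding diam_def less_SUP_iff by (simp add: case_prod_beta)
  also have "\<dots> \<longleftrightarrow> (\<exists>u\<in>V. \<exists>v\<in>V. E u v \<and> dominating_set V E {u, v})"
    using complement_gdist_gt_2_iff[OF assms] by auto
  also have "\<dots> \<longleftrightarrow> has_dominating_edge V E"
    using assms unfolding simple_graph_def has_dominating_edge_def by blast
  finally show ?thesis .
qed

lemma dominating_edge_if_dominating_vertex:
  assumes "simple_graph V E" "card V \<ge> 2" "dominating_set V E {g}"
  shows "has_dominating_edge V E"
proof -
  have g: "g \<in> V" "closed_nbhd_set V E {g} = V"
    using assms(3) by (auto simp: dominating_set_def)
  obtain u where "u \<in> V" "u \<noteq> g" using obtain_other_vertex[OF assms(2)] .
  with g have "E g u" by (auto simp: closed_nbhd_set_def)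
  moreover have "dominating_set V E {g, u}"
    using g \<open>u \<in> V\<close> closed_nbhd_set_subset[OF assms(1), of "{g, u}"]
    by (auto simp: dominating_set_def closed_nbhd_set_def)
  ultimately show ?thesis unfolding has_dominating_edge_def by blast
qed

section \<open>Power domination in lexicographic products\<close>

abbreviation observed :: "'a set \<Rightarrow> ('a \<Rightarrow> 'a \<Rightarrow> bool) \<Rightarrow> 'a set \<Rightarrow> 'a set" where
  "observed V E S \<equiv> zf_closure V E (closed_nbhd_set V E S)"

lemma observed_subset: "simple_graph V E \<Longrightarrow> S \<subseteq> V \<Longrightarrow> observed V E S \<subseteq> V"
  by (intro zf_closure_subset closed_nbhd_set_subset)

lemma lex_edges_iff [simp]:
  "lex_edges VG EG VH EH (g, h) (g', h') \<longleftrightarrow>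
     g \<in> VG \<and> g' \<in> VG \<and> h \<in> VH \<and> h' \<in> VH \<and> (EG g g' \<or> g = g' \<and> EH h h')"
  by (simp add: lex_edges_def)

lemma simple_graph_lex_edges:
  assumes "simple_graph VG EG" "simple_graph VH EH"
  shows "simple_graph (VG \<times> VH) (lex_edges VG EG VH EH)"
  using assms unfolding simple_graph_def lex_edges_def by blast

locale lex_product =
  fixes VG :: "'a set" and EG :: "'a \<Rightarrow> 'a \<Rightarrow> bool"
    and VH :: "'b set" and EH :: "'b \<Rightarrow> 'b \<Rightarrow> bool"
  assumes simple_G: "simple_graph VG EG"
    and simple_H: "simple_graph VH EH"
    and connected_H: "connected_graph VH EH"
    and nontrivial_H: "nontrivial_graph VH EH"
begin

abbreviation "VGH \<equiv> VG \<times> VH"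
abbreviation "EGH \<equiv> lex_edges VG EG VH EH"

lemma card_VH: "card VH \<ge> 2"
  using nontrivial_H by (simp add: nontrivial_graph_def)

lemma VH_nonempty: "VH \<noteq> {}"
  using card_VH by auto

text \<open>Forcing cannot enter \<open>{g} \<times> W\<close> from inside the layer of \<open>g\<close> by the hypothesis on \<open>W\<close>, nor from
  outside, since a vertex outside the layer that sees one vertex of \<open>{g} \<times> W\<close> sees all of it.\<close>
lemma zf_closure_lex_disjoint_layer:
  assumes U: "U \<inter> {g} \<times> W = {}" and W: "W \<subseteq> VH" and not_singleton: "\<And>y. W \<noteq> {y}"
    and closed: "\<And>b y. b \<in> VH - W \<Longrightarrow> EH b y \<Longrightarrow> y \<in> W \<Longrightarrow> \<exists>x. EH b x \<and> x \<in> W \<and> x \<noteq> y"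
  shows "zf_closure VGH EGH U \<inter> {g} \<times> W = {}"
proof -
  have "zf_closure VGH EGH U \<subseteq> - ({g} \<times> W)"
  proof (rule zf_closure_minimal)
    show "U \<subseteq> - ({g} \<times> W)" using U by blast
  next
    fix v w
    assume "v \<in> - ({g} \<times> W)" "EGH v w" "w \<in> VGH"
      and others: "\<forall>z. EGH v z \<and> z \<in> VGH \<and> z \<noteq> w \<longrightarrow> z \<in> - ({g} \<times> W)"
    show "w \<in> - ({g} \<times> W)"
    proof
      assume "w \<in> {g} \<times> W"
      then obtain y where w: "w = (g, y)" "y \<in> W" by blast
      obtain a b where v: "v = (a, b)" by fastforce
      obtain x where x: "x \<in> W" "x \<noteq> y" "EGH v (g, x)"
      proof (cases "a = g")
        case True
        with \<open>v \<in> - ({g} \<times> W)\<close> \<open>EGH v w\<close> have "b \<in> VH - W" "EH b y"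
          using v w simple_graph_edgeD(4)[OF simple_G] by auto
        then obtain x where "EH b x" "x \<in> W" "x \<noteq> y" using closed w(2) by blast
        with that show ?thesis using True v \<open>EGH v w\<close> w W by auto
      next
        case False
        obtain x where "x \<in> W" "x \<noteq> y" using not_singleton[of y] w(2) by blast
        with that show ?thesis using False v \<open>EGH v w\<close> w W by auto
      qed
      with others w W \<open>w \<in> VGH\<close> show False by auto
    qed
  qed
  then show ?thesis by blast
qed

lemma dominating_set_fst_if_power_dominating:
  assumes "power_dominating_set VGH EGH S"
  shows "dominating_set VG EG (fst ` S)"
proof -
  have S: "S \<subseteq> VGH" and all_observed: "observed VGH EGH S = VGH"
    using assms by (auto simp: power_dominating_set_def)
  have "x \<in> closed_nbhd_set VG EG (fst ` S)" if x: "x \<in> VG" for x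
  proof (rule ccontr)
    assume "x \<notin> closed_nbhd_set VG EG (fst ` S)"
    then have "closed_nbhd_set VGH EGH S \<inter> {x} \<times> VH = {}"
      using S unfolding closed_nbhd_set_def by force
    moreover have "VH \<noteq> {y}" for y
      using card_VH by auto
    ultimately have "observed VGH EGH S \<inter> {x} \<times> VH = {}"
      by (intro zf_closure_lex_disjoint_layer) auto
    with all_observed x VH_nonempty show False by blast
  qed
  moreover have "fst ` S \<subseteq> VG" using S by auto
  ultimately show ?thesis
    using closed_nbhd_set_subset[OF simple_G] unfolding dominating_set_def by blast
qed

lemma closed_nbhd_lex_disjoint_layer:
  assumes away: "S - {(g, h)} \<subseteq> (VG - closed_nbhd_set VG EG {g}) \<times> VH"
    and C: "closed_nbhd_set VH EH {h} \<subseteq> C"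
  shows "closed_nbhd_set VGH EGH S \<inter> {g} \<times> (VH - C) = {}"
proof -
  have "z \<notin> {g} \<times> (VH - C)" if "z \<in> closed_nbhd_set VGH EGH S" for z
  proof
    assume "z \<in> {g} \<times> (VH - C)"
    then obtain d where z: "z = (g, d)" "d \<notin> C" by blast
    from that consider "z \<in> S" | a b where "(a, b) \<in> S" "EGH (a, b) z"
      unfolding closed_nbhd_set_def by auto
    then show False
    proof cases
      case 1
      then show False using z away C by (auto simp: closed_nbhd_set_def)
    next
      case 2
      show False
      proof (cases "(a, b) = (g, h)")
        case True
        then show False
          using 2 z C simple_graph_edgeD(4)[OF simple_G] by (auto simp: closed_nbhd_set_def)
      next
        case False
        then have "a \<noteq> g" "\<not> EG g a" using 2 away by (auto simp: closed_nbhd_set_def)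
        then show False using 2 z simple_graph_edgeD(3)[OF simple_G, of a g] by auto
      qed
    qed
  qed
  then show ?thesis by blast
qed

lemma not_power_dominating_lex:
  assumes g: "g \<in> VG" and h: "h \<in> VH" and not_pds: "\<not> power_dominating_set VH EH {h}"
    and away: "S - {(g, h)} \<subseteq> (VG - closed_nbhd_set VG EG {g}) \<times> VH"
  shows "\<not> power_dominating_set VGH EGH S"
proof
  assume pds: "power_dominating_set VGH EGH S"
  define C where "C = observed VH EH {h}"
  have "C \<subseteq> VH" using observed_subset[OF simple_H] h unfolding C_def by blast
  moreover have "C \<noteq> VH" using h not_pds unfolding C_def power_dominating_set_def by blast
  ultimately obtain y\<^sub>0 where y\<^sub>0: "y\<^sub>0 \<in> VH - C" by blast
  have "closed_nbhd_set VH EH {h} \<subseteq> C"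
    unfolding C_def by (blast intro: zf_closure.base)
  with away have "closed_nbhd_set VGH EGH S \<inter> {g} \<times> (VH - C) = {}"
    by (rule closed_nbhd_lex_disjoint_layer)
  moreover have "VH - C \<noteq> {y}" for y
    unfolding C_def by (rule zf_closure_complement_not_singleton[OF simple_H connected_H card_VH])
  moreover have "\<exists>x. EH b x \<and> x \<in> VH - C \<and> x \<noteq> y"
    if "b \<in> C" "EH b y" "y \<in> VH - C" for b y
  proof (rule ccontr)
    assume "\<not> ?thesis"
    then have "y \<in> C"
      using zf_closure.force[of b VH EH _ y] that unfolding C_def by blast
    with \<open>y \<in> VH - C\<close> show False by blast
  qed
  ultimately have "observed VGH EGH S \<inter> {g} \<times> (VH - C) = {}"
    using \<open>C \<subseteq> VH\<close> by (intro zf_closure_lex_disjoint_layer) auto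
  with pds g y\<^sub>0 show False unfolding power_dominating_set_def by blast
qed

text \<open>The forcing process of \<open>H\<close> can be copied inside the layer of \<open>g\<close>, because all neighbours
  of the layer outside it are observed directly from \<open>(g, h)\<close>.\<close>
lemma layer_subset_observed:
  assumes gh: "(g, h) \<in> S" and S: "S \<subseteq> VGH" and pds_h: "power_dominating_set VH EH {h}"
  shows "{g} \<times> VH \<subseteq> observed VGH EGH S"
proof -
  let ?O = "observed VGH EGH S"
  have g: "g \<in> VG" and h: "h \<in> VH" using gh S by auto
  have nbhd_S: "p \<in> ?O" if "p \<in> closed_nbhd_set VGH EGH S" for p
    using that by (rule zf_closure.base)
  have nbhd_layer: "(a, b) \<in> ?O" if "EG g a" "b \<in> VH" for a b
    using that gh g h simple_graph_edgeD(2)[OF simple_G]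
    by (intro nbhd_S) (force simp: closed_nbhd_set_def)
  have "(g, y) \<in> ?O" if "y \<in> observed VH EH {h}" for y
    using that
  proof (induction rule: zf_closure.induct)
    case (base y)
    then show ?case
      using gh g h simple_graph_edgeD(2)[OF simple_H]
      by (intro nbhd_S) (force simp: closed_nbhd_set_def)
  next
    case (force v w)
    have v: "v \<in> VH" using force.hyps(2) simple_graph_edgeD(1)[OF simple_H] by blast
    have "\<forall>p. EGH (g, v) p \<and> p \<in> VGH \<and> p \<noteq> (g, w) \<longrightarrow> p \<in> ?O"
    proof (intro allI impI)
      fix p assume p: "EGH (g, v) p \<and> p \<in> VGH \<and> p \<noteq> (g, w)"
      obtain a b where "p = (a, b)" by fastforce
      with p nbhd_layer force.IH show "p \<in> ?O" by auto
    qed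
    moreover have "EGH (g, v) (g, w)" "(g, w) \<in> VGH" using force.hyps g v by auto
    ultimately show ?case
      using zf_closure.force[of "(g, v)" VGH EGH _ "(g, w)"] force.IH(1) by blast
  qed
  with pds_h show ?thesis unfolding power_dominating_set_def by blast
qed

lemma power_dominating_lex_if_cover:
  assumes S: "S \<subseteq> VGH"
    and cover: "\<And>x. x \<in> VG \<Longrightarrow>
      (\<exists>h. (x, h) \<in> S \<and> power_dominating_set VH EH {h}) \<or> (\<exists>s\<in>S. EG (fst s) x)"
  shows "power_dominating_set VGH EGH S"
proof -
  have "(x, y) \<in> observed VGH EGH S" if "x \<in> VG" "y \<in> VH" for x y
    using cover[OF \<open>x \<in> VG\<close>]
  proof
    assume "\<exists>h. (x, h) \<in> S \<and> power_dominating_set VH EH {h}"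
    then show ?thesis using layer_subset_observed S \<open>y \<in> VH\<close> by blast
  next
    assume "\<exists>s\<in>S. EG (fst s) x"
    then obtain a b where "(a, b) \<in> S" "EG a x" by auto
    then have "(x, y) \<in> closed_nbhd_set VGH EGH S"
      using S that unfolding closed_nbhd_set_def by force
    then show ?thesis by (rule zf_closure.base)
  qed
  then have "observed VGH EGH S = VGH"
    using observed_subset[OF simple_graph_lex_edges[OF simple_G simple_H] S] by auto
  with S show ?thesis unfolding power_dominating_set_def by blast
qed

lemma power_dominating_lex_times:
  assumes "dominating_set VG EG A" "power_dominating_set VH EH {h}"
  shows "power_dominating_set VGH EGH (A \<times> {h})"
proof (rule power_dominating_lex_if_cover)
  show "A \<times> {h} \<subseteq> VGH"
    using assms by (auto simp: dominating_set_def power_dominating_set_def)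
next
  fix x assume "x \<in> VG"
  then have "x \<in> A \<or> (\<exists>a\<in>A. EG a x)"
    using assms(1) unfolding dominating_set_def closed_nbhd_set_def by blast
  then show "(\<exists>h'. (x, h') \<in> A \<times> {h} \<and> power_dominating_set VH EH {h'})
      \<or> (\<exists>s\<in>A \<times> {h}. EG (fst s) x)"
    using assms(2) by auto
qed

lemma power_dominating_lex_dominating_edge:
  assumes "EG u v" "dominating_set VG EG {u, v}" "h \<in> VH"
  shows "power_dominating_set VGH EGH {(u, h), (v, h)}"
proof (rule power_dominating_lex_if_cover)
  show "{(u, h), (v, h)} \<subseteq> VGH"
    using assms(1,3) simple_graph_edgeD(1,2)[OF simple_G] by blast
next
  fix x assume "x \<in> VG"
  then have "x = u \<or> x = v \<or> EG u x \<or> EG v x"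
    using assms(2) unfolding dominating_set_def closed_nbhd_set_def by blast
  then have "EG u x \<or> EG v x"
    using assms(1) simple_graph_edgeD(3)[OF simple_G assms(1)] by blast
  then show "(\<exists>h'. (x, h') \<in> {(u, h), (v, h)} \<and> power_dominating_set VH EH {h'})
      \<or> (\<exists>s\<in>{(u, h), (v, h)}. EG (fst s) x)"
    by auto
qed

lemma lex_singleton_power_dominating_iff:
  "(\<exists>p. power_dominating_set VGH EGH {p}) \<longleftrightarrow>
     (\<exists>g. dominating_set VG EG {g}) \<and> (\<exists>h. power_dominating_set VH EH {h})"
proof
  assume "\<exists>p. power_dominating_set VGH EGH {p}"
  then obtain g h where pds: "power_dominating_set VGH EGH {(g, h)}" by auto
  then have "g \<in> VG" "h \<in> VH" by (auto simp: power_dominating_set_def)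
  then have "power_dominating_set VH EH {h}"
    using not_power_dominating_lex[of g h "{(g, h)}"] pds by blast
  moreover have "dominating_set VG EG {g}"
    using dominating_set_fst_if_power_dominating[OF pds] by simp
  ultimately show "(\<exists>g. dominating_set VG EG {g}) \<and> (\<exists>h. power_dominating_set VH EH {h})"
    by blast
next
  assume "(\<exists>g. dominating_set VG EG {g}) \<and> (\<exists>h. power_dominating_set VH EH {h})"
  then obtain g h where "dominating_set VG EG {g}" "power_dominating_set VH EH {h}" by blast
  then have "power_dominating_set VGH EGH ({g} \<times> {h})" by (rule power_dominating_lex_times)
  then show "\<exists>p. power_dominating_set VGH EGH {p}" by auto
qed

lemma lex_pair_power_dominating_adjacent:
  assumes pds: "power_dominating_set VGH EGH {(g\<^sub>1, h\<^sub>1), (g\<^sub>2, h\<^sub>2)}"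
    and "g\<^sub>1 \<noteq> g\<^sub>2" "\<not> power_dominating_set VH EH {h\<^sub>1}"
  shows "EG g\<^sub>1 g\<^sub>2"
proof (rule ccontr)
  assume "\<not> EG g\<^sub>1 g\<^sub>2"
  moreover have "g\<^sub>1 \<in> VG" "h\<^sub>1 \<in> VH" "g\<^sub>2 \<in> VG"
    using pds by (auto simp: power_dominating_set_def)
  ultimately have "{(g\<^sub>1, h\<^sub>1), (g\<^sub>2, h\<^sub>2)} - {(g\<^sub>1, h\<^sub>1)} \<subseteq> (VG - closed_nbhd_set VG EG {g\<^sub>1}) \<times> VH"
    using pds \<open>g\<^sub>1 \<noteq> g\<^sub>2\<close> by (auto simp: closed_nbhd_set_def power_dominating_set_def)
  with \<open>g\<^sub>1 \<in> VG\<close> \<open>h\<^sub>1 \<in> VH\<close> show False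
    using not_power_dominating_lex assms(3) pds by blast
qed

lemma lex_pair_power_dominating_cases:
  assumes G: "card VG \<ge> 2"
    and pds: "power_dominating_set VGH EGH {(g\<^sub>1, h\<^sub>1), (g\<^sub>2, h\<^sub>2)}"
    and no_single: "\<not> (\<exists>p. power_dominating_set VGH EGH {p})"
  shows "\<not> (\<exists>g. dominating_set VG EG {g}) \<and> (\<exists>a b. a \<noteq> b \<and> dominating_set VG EG {a, b})
           \<and> (\<exists>h. power_dominating_set VH EH {h})
         \<or> has_dominating_edge VG EG \<and> \<not> (\<exists>h. power_dominating_set VH EH {h})"
proof -
  have dom: "dominating_set VG EG {g\<^sub>1, g\<^sub>2}"
    using dominating_set_fst_if_power_dominating[OF pds] by simp
  show ?thesis
  proof (cases "\<exists>h. power_dominating_set VH EH {h}")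
    case True
    with no_single have "\<not> (\<exists>g. dominating_set VG EG {g})"
      using lex_singleton_power_dominating_iff by blast
    moreover from this dom have "g\<^sub>1 \<noteq> g\<^sub>2" by auto
    ultimately show ?thesis using dom True by blast
  next
    case False
    have "has_dominating_edge VG EG"
    proof (cases "g\<^sub>1 = g\<^sub>2")
      case True
      with dom show ?thesis using dominating_edge_if_dominating_vertex[OF simple_G G] by simp
    next
      case False
      then have "EG g\<^sub>1 g\<^sub>2"
        using lex_pair_power_dominating_adjacent pds \<open>\<not> (\<exists>h. power_dominating_set VH EH {h})\<close>
        by blast
      with dom show ?thesis unfolding has_dominating_edge_def by blast
    qed
    with False show ?thesis by blast
  qed
qed

lemma lex_pair_power_dominating_iff:
  assumes "card VG \<ge> 2"
  shows "\<not> (\<exists>p. power_dominating_set VGH EGH {p})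
           \<and> (\<exists>p q. p \<noteq> q \<and> power_dominating_set VGH EGH {p, q}) \<longleftrightarrow>
         \<not> (\<exists>g. dominating_set VG EG {g}) \<and> (\<exists>a b. a \<noteq> b \<and> dominating_set VG EG {a, b})
           \<and> (\<exists>h. power_dominating_set VH EH {h})
         \<or> has_dominating_edge VG EG \<and> \<not> (\<exists>h. power_dominating_set VH EH {h})"
    (is "\<not> ?single \<and> ?pair \<longleftrightarrow> ?by_domination \<or> ?by_edge")
proof
  assume "\<not> ?single \<and> ?pair"
  then show "?by_domination \<or> ?by_edge"
    using lex_pair_power_dominating_cases[OF assms] by fast
next
  have "\<not> ?single \<and> ?pair" if ?by_domination
  proof -
    from that obtain a b h where "a \<noteq> b" "dominating_set VG EG {a, b}"
      "power_dominating_set VH EH {h}" by blast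
    then have "power_dominating_set VGH EGH ({a, b} \<times> {h})" by (intro power_dominating_lex_times)
    with \<open>a \<noteq> b\<close> have ?pair by (intro exI[of _ "(a, h)"] exI[of _ "(b, h)"]) auto
    with that show ?thesis using lex_singleton_power_dominating_iff by blast
  qed
  moreover have "\<not> ?single \<and> ?pair" if ?by_edge
  proof -
    from that obtain u v where uv: "EG u v" "dominating_set VG EG {u, v}"
      unfolding has_dominating_edge_def by blast
    obtain h where "h \<in> VH" using VH_nonempty by blast
    with uv have "power_dominating_set VGH EGH {(u, h), (v, h)}"
      by (rule power_dominating_lex_dominating_edge)
    moreover have "u \<noteq> v" using simple_graph_edgeD(4)[OF simple_G uv(1)] .
    ultimately have ?pair by blast
    with that show ?thesis using lex_singleton_power_dominating_iff by blast
  qed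
  ultimately show "?by_domination \<or> ?by_edge \<Longrightarrow> \<not> ?single \<and> ?pair" by blast
qed

end

theorem mainTheorem9:
  fixes VG :: "'a set" and EG :: "'a \<Rightarrow> 'a \<Rightarrow> bool"
    and VH :: "'b set" and EH :: "'b \<Rightarrow> 'b \<Rightarrow> bool"
  assumes "simple_graph VG EG" "connected_graph VG EG" "nontrivial_graph VG EG"
      and "simple_graph VH EH" "connected_graph VH EH" "nontrivial_graph VH EH"
  shows "(power_domination_number (VG \<times> VH) (lex_edges VG EG VH EH) = 1 \<longleftrightarrow>
            domination_number VG EG = 1 \<and> power_domination_number VH EH = 1)
       \<and> (power_domination_number (VG \<times> VH) (lex_edges VG EG VH EH) = 2 \<longleftrightarrow>
            (domination_number VG EG = 2 \<and> power_domination_number VH EH = 1) \<or>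
            (diam VG (complement VG EG) > 2 \<and> power_domination_number VH EH > 1))"
proof -
  interpret lex_product VG EG VH EH
    by unfold_locales (fact assms)+
  have card_VG: "card VG \<ge> 2" using assms(3) by (simp add: nontrivial_graph_def)
  then have VG: "VG \<noteq> {}" by auto
  have VGH: "VGH \<noteq> {}" using VG VH_nonempty by simp
  note simple_GH = simple_graph_lex_edges[OF assms(1,4)]
  show ?thesis
    unfolding power_domination_number_eq_1_iff[OF simple_GH VGH]
      power_domination_number_eq_2_iff[OF simple_GH VGH]
      power_domination_number_eq_1_iff[OF assms(4) VH_nonempty]
      power_domination_number_gt_1_iff[OF assms(4) VH_nonempty]
      domination_number_eq_1_iff[OF assms(1) VG] domination_number_eq_2_iff[OF assms(1) VG]
      diam_complement_gt_2_iff[OF assms(1)]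
    using lex_singleton_power_dominating_iff lex_pair_power_dominating_iff[OF card_VG]
    by blast
qed

end
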